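(* Let $n\ge2$ and $q_1,q_2\in\mathbb{C}$ with $q_1q_2\ne0$, put $q=-q_2/q_1$, and assume $1+q+\cdots+q^{n-1}\ne0$. Then $\mathbf{E}=\mathbf{L}\oplus\mathbf{F}$, and this is an orthogonal decomposition (with respect to the bilinear form $\langle-,-\rangle$) into $H_n(q_1,q_2)$-submodules, hence also into $\mathbb{C}B_n$-submodules.
   Context: $B_n$ is Artin's braid group with generators $\sigma_1,\dots,\sigma_{n-1}$. The Iwahori--Hecke algebra $H_n(q_1,q_2)$ is generated by $T_1,\dots,T_{n-1}$ subject to the braid relations $T_iT_{i+1}T_i=T_{i+1}T_iT_{i+1}$, $T_iT_j=T_jT_i$ ($|i-j|>1$) and $(T_i-q_1)(T_i-q_2)=0$. Let $\mathbf{E}=\mathbb{C}^n$ with basis $e_1,\dots,e_n$, on which $T_i$ (and $\sigma_i$) act by $e_j\mapsto q_1e_j$ ($j\ne i,i+1$), $e_{i+1}\mapsto-q_2e_i$, $e_i\mapsto(q_1+q_2)e_i+q_1e_{i+1}$ (the generalized Burau representation, which factors through $H_n(q_1,q_2)$). Let $\mathbf{L}=\mathbb{C}(e_1+\cdots+e_n)$ and $\mathbf{F}=\mathrm{span}\{q_2e_i+q_1e_{i+1}:1\le i\le n-1\}$. The symmetric bilinear form on $\mathbf{E}$ is $\langle e_i,e_j\rangle=\delta_{ij}q^{j-1}$. *)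

theory Defs
  imports Complex_Main
begin

text \<open>Vectors of E = C^n are modelled as functions nat => complex, indexed 1..n,
  vanishing outside {1..n}. Basis vector e_j is burau_e j.\<close>

definition burau_E :: "nat \<Rightarrow> (nat \<Rightarrow> complex) set" where
  "burau_E n = {v. \<forall>j. (j < 1 \<or> n < j) \<longrightarrow> v j = 0}"

definition burau_e :: "nat \<Rightarrow> nat \<Rightarrow> complex" where
  "burau_e j = (\<lambda>k. if k = j then 1 else 0)"

text \<open>Action of T_i (and sigma_i): e_j -> q1 e_j (j not i,i+1), e_(i+1) -> -q2 e_i,
  e_i -> (q1+q2) e_i + q1 e_(i+1), extended linearly.\<close>
definition burau_T :: "complex \<Rightarrow> complex \<Rightarrow> nat \<Rightarrow> (nat \<Rightarrow> complex) \<Rightarrow> (nat \<Rightarrow> complex)" where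
  "burau_T q1 q2 i v = (\<lambda>j. if j = i then (q1 + q2) * v i - q2 * v (i + 1)
                          else if j = i + 1 then q1 * v i
                          else q1 * v j)"

definition burau_L :: "nat \<Rightarrow> (nat \<Rightarrow> complex) set" where
  "burau_L n = {v. \<exists>c::complex. v = (\<lambda>j. \<Sum>k\<in>{1..n}. c * burau_e k j)}"

definition burau_F :: "nat \<Rightarrow> complex \<Rightarrow> complex \<Rightarrow> (nat \<Rightarrow> complex) set" where
  "burau_F n q1 q2 = {v. \<exists>c::nat \<Rightarrow> complex.
      v = (\<lambda>j. \<Sum>i\<in>{1..n-1}. c i * (q2 * burau_e i j + q1 * burau_e (i + 1) j))}"

definition burau_form :: "nat \<Rightarrow> complex \<Rightarrow> (nat \<Rightarrow> complex) \<Rightarrow> (nat \<Rightarrow> complex) \<Rightarrow> complex" where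
  "burau_form n q v w = (\<Sum>j\<in>{1..n}. v j * w j * q ^ (j - 1))"

end

theory Submission imports Defs begin

text \<open>Let \<open>\<phi>(v) = \<Sum>\<^sub>j v\<^sub>j q\<^sup>j\<^sup>-\<^sup>1\<close> (\<open>burau_weight\<close>), so that \<open>\<langle>c(e\<^sub>1+\<dots>+e\<^sub>n), v\<rangle> = c \<phi>(v)\<close>.
  Since \<open>q\<^sub>2 + q\<^sub>1 q = 0\<close>, \<open>\<phi>\<close> kills the generators \<open>g\<^sub>i = q\<^sub>2 e\<^sub>i + q\<^sub>1 e\<^sub>i\<^sub>+\<^sub>1\<close> (\<open>burau_gen\<close>)
  of \<open>F\<close>, and solving the triangular system \<open>v = \<Sum> c\<^sub>i g\<^sub>i\<close> from the top down
  shows that \<open>F\<close> is exactly the kernel of \<open>\<phi>\<close> on \<open>E\<close>. Since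
  \<open>T\<^sub>i v = q\<^sub>1 v + (v\<^sub>i - v\<^sub>i\<^sub>+\<^sub>1) g\<^sub>i\<close>, we get \<open>\<phi> \<circ> T\<^sub>i = q\<^sub>1 \<phi>\<close>, so \<open>T\<^sub>i\<close> preserves \<open>F\<close>; it maps
  \<open>F\<close> onto \<open>F\<close> because the quadratic relation expresses \<open>T\<^sub>i\<^sup>-\<^sup>1\<close> as a polynomial in \<open>T\<^sub>i\<close>.
  Finally \<open>\<phi>(e\<^sub>1+\<dots>+e\<^sub>n) = 1+q+\<dots>+q\<^sup>n\<^sup>-\<^sup>1 \<noteq> 0\<close> makes \<open>L\<close> a complement of \<open>ker \<phi>\<close>.\<close>

definition const_vec :: "nat \<Rightarrow> complex \<Rightarrow> nat \<Rightarrow> complex" where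
  "const_vec n c = (\<lambda>j. if j \<in> {1..n} then c else 0)"

definition burau_gen :: "complex \<Rightarrow> complex \<Rightarrow> nat \<Rightarrow> nat \<Rightarrow> complex" where
  "burau_gen q1 q2 i = (\<lambda>j. q2 * burau_e i j + q1 * burau_e (i + 1) j)"

definition burau_weight :: "nat \<Rightarrow> complex \<Rightarrow> (nat \<Rightarrow> complex) \<Rightarrow> complex" where
  "burau_weight n q v = (\<Sum>j\<in>{1..n}. v j * q ^ (j - 1))"

definition burau_kernel :: "nat \<Rightarrow> complex \<Rightarrow> (nat \<Rightarrow> complex) set" where
  "burau_kernel n q = {v \<in> burau_E n. burau_weight n q v = 0}"

lemma burau_L_eq_range: "burau_L n = range (const_vec n)"
proof -
  have "(\<lambda>j. \<Sum>k\<in>{1..n}. c * burau_e k j) = const_vec n c" for c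
    by (auto simp: burau_e_def const_vec_def if_distrib cong: if_cong)
  then show ?thesis
    unfolding burau_L_def by auto
qed

lemma burau_F_eq_gen_sums:
  "burau_F n q1 q2 = range (\<lambda>c j. \<Sum>i\<in>{1..n-1}. c i * burau_gen q1 q2 i j)"
  unfolding burau_F_def burau_gen_def by auto

lemma const_vec_in_burau_E: "const_vec n c \<in> burau_E n"
  by (simp add: const_vec_def burau_E_def)

lemma burau_form_const_vec:
  "burau_form n q (const_vec n c) v = c * burau_weight n q v"
  unfolding burau_form_def burau_weight_def const_vec_def
  by (simp add: sum_distrib_left mult.assoc)

lemma burau_weight_const_vec:
  "burau_weight n q (const_vec n c) = c * (\<Sum>k<n. q ^ k)"
proof -
  have "(\<Sum>j\<in>{1..n}. q ^ (j - 1)) = (\<Sum>k<n. q ^ k)"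
    by (induction n) auto
  then show ?thesis
    by (simp add: burau_weight_def const_vec_def sum_distrib_left[symmetric])
qed

lemma burau_weight_lincomb:
  "burau_weight n q (\<lambda>j. a * v j + b * w j) = a * burau_weight n q v + b * burau_weight n q w"
  unfolding burau_weight_def by (simp add: sum.distrib sum_distrib_left algebra_simps)

lemma burau_weight_sum:
  "burau_weight n q (\<lambda>j. \<Sum>i\<in>I. c i * v i j) = (\<Sum>i\<in>I. c i * burau_weight n q (v i))"
  unfolding burau_weight_def sum_distrib_left sum_distrib_right mult.assoc
  by (rule sum.swap)

lemma burau_weight_gen:
  assumes "q2 = - (q1 * q)" and "1 \<le> i" and "i < n"
  shows "burau_weight n q (burau_gen q1 q2 i) = 0"
proof -
  have "burau_weight n q (burau_gen q1 q2 i)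
      = (\<Sum>j\<in>{1..n}. (if j = i then q2 * q ^ (i - 1) else 0) + (if j = i + 1 then q1 * q ^ i else 0))"
    unfolding burau_weight_def burau_gen_def burau_e_def by (rule sum.cong) auto
  also have "\<dots> = q2 * q ^ (i - 1) + q1 * q ^ i"
    using assms(2,3) by (simp add: sum.distrib)
  also have "\<dots> = q ^ (i - 1) * (q2 + q1 * q)"
    using \<open>1 \<le> i\<close> by (cases i) (auto simp: algebra_simps)
  finally show ?thesis
    using assms(1) by simp
qed

lemma burau_T_eq_gen:
  "burau_T q1 q2 i v = (\<lambda>j. q1 * v j + (v i - v (i + 1)) * burau_gen q1 q2 i j)"
  by (rule ext) (simp add: burau_T_def burau_gen_def burau_e_def algebra_simps)

lemma burau_T_lincomb:
  "burau_T q1 q2 i (\<lambda>j. a * x j + b * y j)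
    = (\<lambda>j. a * burau_T q1 q2 i x j + b * burau_T q1 q2 i y j)"
  by (rule ext) (simp add: burau_T_def algebra_simps)

lemma burau_T_quadratic:
  "burau_T q1 q2 i (burau_T q1 q2 i v) = (\<lambda>j. (q1 + q2) * burau_T q1 q2 i v j - q1 * q2 * v j)"
  by (rule ext) (auto simp: burau_T_def algebra_simps)

lemma burau_T_in_burau_E:
  assumes "1 \<le> i" and "i < n" and "v \<in> burau_E n"
  shows "burau_T q1 q2 i v \<in> burau_E n"
  using assms by (simp add: burau_E_def burau_T_def)

lemma burau_weight_burau_T:
  assumes "q2 = - (q1 * q)" and "1 \<le> i" and "i < n"
  shows "burau_weight n q (burau_T q1 q2 i v) = q1 * burau_weight n q v"
proof -
  have "burau_weight n q (burau_T q1 q2 i v)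
      = q1 * burau_weight n q v + (v i - v (i + 1)) * burau_weight n q (burau_gen q1 q2 i)"
    unfolding burau_T_eq_gen by (rule burau_weight_lincomb)
  then show ?thesis
    using burau_weight_gen[OF assms] by simp
qed

lemma burau_T_const_vec:
  assumes "1 \<le> i" and "i < n"
  shows "burau_T q1 q2 i (const_vec n c) = const_vec n (q1 * c)"
  using assms by (simp add: burau_T_eq_gen const_vec_def fun_eq_iff)

lemma sum_burau_gen_supported:
  assumes "\<And>k. k \<notin> {1..n-1} \<Longrightarrow> c k = 0"
  shows "(\<Sum>i\<in>{1..n-1}. c i * burau_gen q1 q2 i j) = q2 * c j + q1 * c (j - 1)"
proof -
  have "(\<Sum>i\<in>{1..n-1}. c i * burau_gen q1 q2 i j)
      = q2 * (\<Sum>i\<in>{1..n-1}. if i = j then c i else 0)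
        + q1 * (\<Sum>i\<in>{1..n-1}. if i + 1 = j then c i else 0)"
  proof -
    have "(\<Sum>i\<in>{1..n-1}. c i * burau_gen q1 q2 i j)
        = (\<Sum>i\<in>{1..n-1}. q2 * (if i = j then c i else 0) + q1 * (if i + 1 = j then c i else 0))"
      by (rule sum.cong) (auto simp: burau_gen_def burau_e_def)
    then show ?thesis
      by (simp only: sum.distrib sum_distrib_left[symmetric])
  qed
  also have "(\<Sum>i\<in>{1..n-1}. if i = j then c i else 0) = c j"
    using assms by (simp add: sum.delta')
  also have "(\<Sum>i\<in>{1..n-1}. if i + 1 = j then c i else 0) = c (j - 1)"
  proof (cases j)
    case 0
    then show ?thesis using assms[of 0] by simp
  next
    case (Suc m)
    then show ?thesis using assms[of m] by (simp add: sum.delta')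
  qed
  finally show ?thesis .
qed

lemma tail_sum_step:
  fixes w :: "nat \<Rightarrow> 'a::comm_semiring_1"
  assumes "m < n"
  shows "(\<Sum>k\<in>{m<..n}. w k * q ^ (k - Suc m))
    = w (Suc m) + q * (\<Sum>k\<in>{Suc m<..n}. w k * q ^ (k - Suc (Suc m)))"
proof -
  have "{m<..n} = insert (Suc m) {Suc m<..n}"
    using assms by auto
  moreover have "(\<Sum>k\<in>{Suc m<..n}. w k * q ^ (k - Suc m))
      = q * (\<Sum>k\<in>{Suc m<..n}. w k * q ^ (k - Suc (Suc m)))"
    unfolding sum_distrib_left
  proof (rule sum.cong)
    fix k assume "k \<in> {Suc m<..n}"
    then have "q ^ (k - Suc m) = q * q ^ (k - Suc (Suc m))"
      by (simp flip: power_Suc add: Suc_diff_Suc)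
    then show "w k * q ^ (k - Suc m) = q * (w k * q ^ (k - Suc (Suc m)))"
      by (simp add: mult_ac)
  qed simp
  ultimately show ?thesis
    by simp
qed

lemma burau_F_subset_kernel:
  assumes "q2 = - (q1 * q)"
  shows "burau_F n q1 q2 \<subseteq> burau_kernel n q"
proof
  fix v assume "v \<in> burau_F n q1 q2"
  then obtain c where v: "v = (\<lambda>j. \<Sum>i\<in>{1..n-1}. c i * burau_gen q1 q2 i j)"
    by (auto simp: burau_F_eq_gen_sums)
  have "v \<in> burau_E n"
    unfolding v burau_E_def burau_gen_def burau_e_def by (auto intro!: sum.neutral)
  moreover have "burau_weight n q v = 0"
    unfolding v burau_weight_sum using burau_weight_gen[OF assms] by (auto intro!: sum.neutral)
  ultimately show "v \<in> burau_kernel n q"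
    by (simp add: burau_kernel_def)
qed

text \<open>The coefficients are the tail sums \<open>t\<^sub>m = \<Sum>\<^sub>k\<^sub>>\<^sub>m w\<^sub>k q\<^sup>k\<^sup>-\<^sup>m\<^sup>-\<^sup>1\<close>, divided by \<open>q\<^sub>1\<close>;
  they vanish at \<open>m = 0\<close> because \<open>t\<^sub>0\<close> is the weight of \<open>w\<close>.\<close>

lemma kernel_subset_burau_F:
  assumes "q1 \<noteq> 0" and "q2 = - (q1 * q)"
  shows "burau_kernel n q \<subseteq> burau_F n q1 q2"
proof
  fix w assume "w \<in> burau_kernel n q"
  then have w: "w \<in> burau_E n" "burau_weight n q w = 0"
    by (simp_all add: burau_kernel_def)
  define t where "t m = (\<Sum>k\<in>{m<..n}. w k * q ^ (k - Suc m))" for m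
  define c where "c m = t m / q1" for m
  have "{0<..n} = {1..n}"
    by auto
  then have "t 0 = 0"
    using w(2) by (simp add: t_def burau_weight_def)
  then have c_supp: "c k = 0" if "k \<notin> {1..n-1}" for k
    using that by (cases "k = 0") (auto simp: c_def t_def)
  have "w j = q2 * c j + q1 * c (j - 1)" for j
  proof (cases "j \<in> {1..n}")
    case True
    then have "j - 1 < n" "Suc (j - 1) = j"
      by auto
    then have "t (j - 1) = w j + q * t j"
      using tail_sum_step[of "j - 1" n w q] by (simp add: t_def)
    then show ?thesis
      using assms by (simp add: c_def)
  next
    case False
    then have "j \<notin> {1..n-1}" "j - 1 \<notin> {1..n-1}"
      by auto
    then have "c j = 0" "c (j - 1) = 0"
      using c_supp by blast+
    moreover have "w j = 0"
    proof -
      have "j < 1 \<or> n < j"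
        using False by auto
      then show ?thesis
        using w(1) unfolding burau_E_def by blast
    qed
    ultimately show ?thesis
      by simp
  qed
  then have "w = (\<lambda>j. \<Sum>i\<in>{1..n-1}. c i * burau_gen q1 q2 i j)"
    using sum_burau_gen_supported[OF c_supp] by auto
  then show "w \<in> burau_F n q1 q2"
    by (auto simp: burau_F_eq_gen_sums)
qed

lemma burau_F_eq_kernel:
  assumes "q1 \<noteq> 0" and "q2 = - (q1 * q)"
  shows "burau_F n q1 q2 = burau_kernel n q"
  using burau_F_subset_kernel[OF assms(2)] kernel_subset_burau_F[OF assms] by (rule antisym)

lemma burau_kernel_lincomb:
  assumes "x \<in> burau_kernel n q" and "y \<in> burau_kernel n q"
  shows "(\<lambda>j. a * x j + b * y j) \<in> burau_kernel n q"
  using assms by (simp add: burau_kernel_def burau_E_def burau_weight_lincomb)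

lemma burau_T_image_kernel:
  assumes "q1 * q2 \<noteq> 0" and "q2 = - (q1 * q)" and "1 \<le> i" and "i < n"
  shows "burau_T q1 q2 i ` burau_kernel n q = burau_kernel n q" (is "?T ` ?K = ?K")
proof
  show "?T ` ?K \<subseteq> ?K"
    using burau_T_in_burau_E[OF assms(3,4)] burau_weight_burau_T[OF assms(2-4)]
    by (auto simp: burau_kernel_def)
  show "?K \<subseteq> ?T ` ?K"
  proof
    fix x assume x: "x \<in> ?K"
    define y where "y = (\<lambda>j. (q1 + q2) / (q1 * q2) * x j + (- 1 / (q1 * q2)) * ?T x j)"
    have "?T x \<in> ?K"
      using x \<open>?T ` ?K \<subseteq> ?K\<close> by blast
    with x have "y \<in> ?K"
      unfolding y_def by (rule burau_kernel_lincomb)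
    moreover have "?T y = x"
      unfolding y_def burau_T_lincomb burau_T_quadratic
      using assms(1) by (simp add: fun_eq_iff field_simps)
    ultimately show "x \<in> ?T ` ?K"
      by force
  qed
qed

lemma burau_T_image_burau_L:
  assumes "q1 \<noteq> 0" and "1 \<le> i" and "i < n"
  shows "burau_T q1 q2 i ` burau_L n = burau_L n"
proof -
  have T: "burau_T q1 q2 i (const_vec n c) = const_vec n (q1 * c)" for c
    using assms(2,3) by (rule burau_T_const_vec)
  show ?thesis
    unfolding burau_L_eq_range
  proof
    show "burau_T q1 q2 i ` range (const_vec n) \<subseteq> range (const_vec n)"
      by (auto simp only: T)
    show "range (const_vec n) \<subseteq> burau_T q1 q2 i ` range (const_vec n)"
    proof
      fix v assume "v \<in> range (const_vec n)"
      then obtain c where "v = const_vec n c"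
        by blast
      then have "v = burau_T q1 q2 i (const_vec n (c / q1))"
        using assms(1) by (simp add: T)
      then show "v \<in> burau_T q1 q2 i ` range (const_vec n)"
        by blast
    qed
  qed
qed

lemma const_vec_in_burau_kernel_iff:
  assumes "(\<Sum>k<n. q ^ k) \<noteq> 0"
  shows "const_vec n c \<in> burau_kernel n q \<longleftrightarrow> c = 0"
  using assms by (simp add: burau_kernel_def const_vec_in_burau_E burau_weight_const_vec)

lemma range_const_vec_Int_burau_kernel:
  assumes "(\<Sum>k<n. q ^ k) \<noteq> 0"
  shows "range (const_vec n) \<inter> burau_kernel n q = {(\<lambda>_. 0)}"
proof -
  have zero: "const_vec n 0 = (\<lambda>_. 0)"
    by (simp add: const_vec_def)
  then show ?thesis
    using const_vec_in_burau_kernel_iff[OF assms] by (auto simp flip: zero)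
qed

lemma burau_E_decompose:
  assumes "(\<Sum>k<n. q ^ k) \<noteq> 0" and "v \<in> burau_E n"
  obtains c w where "w \<in> burau_kernel n q" and "v = (\<lambda>j. const_vec n c j + w j)"
proof -
  define c where "c = burau_weight n q v / (\<Sum>k<n. q ^ k)"
  define l where "l = const_vec n c"
  have "(\<lambda>j. v j - l j) \<in> burau_E n"
    using assms(2) const_vec_in_burau_E by (simp add: l_def burau_E_def)
  moreover have "burau_weight n q (\<lambda>j. 1 * v j + (- 1) * l j) = 0"
    using assms(1) by (simp only: burau_weight_lincomb) (simp add: c_def l_def burau_weight_const_vec)
  ultimately have "(\<lambda>j. v j - l j) \<in> burau_kernel n q"
    by (simp add: burau_kernel_def)
  then show ?thesis
    by (rule that[of _ c]) (simp add: l_def)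
qed

theorem corollary3p6:
  fixes n :: nat and q1 q2 :: complex
  assumes "n \<ge> 2" and "q1 * q2 \<noteq> 0"
    and "(\<Sum>k<n. (- q2 / q1) ^ k) \<noteq> 0"
  shows "burau_L n \<subseteq> burau_E n \<and> burau_F n q1 q2 \<subseteq> burau_E n
    \<and> burau_L n \<inter> burau_F n q1 q2 = {(\<lambda>_. 0)}
    \<and> (\<forall>v\<in>burau_E n. \<exists>l\<in>burau_L n. \<exists>f\<in>burau_F n q1 q2. v = (\<lambda>j. l j + f j))
    \<and> (\<forall>l\<in>burau_L n. \<forall>f\<in>burau_F n q1 q2. burau_form n (- q2 / q1) l f = 0)
    \<and> (\<forall>i. 1 \<le> i \<and> i < n \<longrightarrow>
          burau_T q1 q2 i ` burau_L n = burau_L n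
        \<and> burau_T q1 q2 i ` burau_F n q1 q2 = burau_F n q1 q2)"
proof -
  define q where "q = - q2 / q1"
  have "q1 \<noteq> 0" and S: "(\<Sum>k<n. q ^ k) \<noteq> 0"
    using assms(2,3) by (auto simp: q_def)
  then have q2: "q2 = - (q1 * q)"
    by (simp add: q_def)
  note F = burau_F_eq_kernel[OF \<open>q1 \<noteq> 0\<close> q2] and L = burau_L_eq_range
  have "\<exists>l\<in>burau_L n. \<exists>f\<in>burau_F n q1 q2. v = (\<lambda>j. l j + f j)" if "v \<in> burau_E n" for v
    using burau_E_decompose[OF S that] by (metis F L rangeI)
  moreover have "\<forall>l\<in>burau_L n. \<forall>f\<in>burau_F n q1 q2. burau_form n q l f = 0"
    by (auto simp: F L burau_kernel_def burau_form_const_vec)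
  moreover have "burau_T q1 q2 i ` burau_L n = burau_L n
      \<and> burau_T q1 q2 i ` burau_F n q1 q2 = burau_F n q1 q2" if "1 \<le> i" "i < n" for i
    using burau_T_image_burau_L[OF \<open>q1 \<noteq> 0\<close> that] burau_T_image_kernel[OF assms(2) q2 that]
    by (simp add: F)
  moreover have "burau_L n \<subseteq> burau_E n" "burau_F n q1 q2 \<subseteq> burau_E n"
    by (auto simp: L F burau_kernel_def const_vec_in_burau_E)
  ultimately show ?thesis
    using range_const_vec_Int_burau_kernel[OF S] unfolding q_def[symmetric] F L by blast
qed

end
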